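(* Let $p>0$, $\alpha:=2/(1+p)$, let $\mu_0$ be a probability measure on $\mathbb{R}$ and let $\mu(\cdot,t)$, $t\ge0$, be the probability measures corresponding to the solution of the inelastic Kac equation with initial datum $\mu_0$ (see context). If \[ \limsup_{x\to+\infty}x^\alpha(1-F^*_0(x))<+\infty, \] then the family $\{\mu(\cdot,t)\}_{t\geq0}$ is uniformly tight, i.e. for every $\varepsilon>0$ there is a bounded closed interval $I_\varepsilon\subset\mathbb{R}$ with $\inf_{t\geq0}\mu(I_\varepsilon,t)>1-\varepsilon$.
   Context: For $\theta\in(0,2\pi]$ put $c_p(\theta):=\cos\theta|\cos\theta|^p$, $s_p(\theta):=\sin\theta|\sin\theta|^p$. With $\varphi_0$ the characteristic function of $\mu_0$, the inelastic Kac equation is the Cauchy problem \[ \frac{\partial}{\partial t}\varphi(\xi,t)=\frac{1}{2\pi}\int_{0}^{2\pi}\varphi(\xi c_p(\theta),t)\varphi(\xi s_p(\theta),t)\,d\theta-\varphi(\xi,t)\ (t>0),\qquad \varphi(\xi,0^+)=\varphi_0(\xi), \] which has a unique solution in the class of characteristic functions of probability measures on $\mathbb{R}$; $\mu(\cdot,t)$ is the probability measure with characteristic function $\varphi(\cdot,t)$. With $F_0(x):=\mu_0((-\infty,x])$, $F_0^*$ denotes the distribution function with $F^*_0(x)=\frac12[F_0(x)+1-F_0(-x)]$ at continuity points $x$. *)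

theory Defs
  imports "HOL-Probability.Probability"
begin

definition cp :: "real \<Rightarrow> real \<Rightarrow> real" where
  "cp p \<theta> = cos \<theta> * \<bar>cos \<theta>\<bar> powr p"

definition sp :: "real \<Rightarrow> real \<Rightarrow> real" where
  "sp p \<theta> = sin \<theta> * \<bar>sin \<theta>\<bar> powr p"

text \<open>Distribution function of the symmetrized measure: the right-continuous
  F0* with F0*(x) = (F0(x) + 1 - F0(-x))/2 at continuity points.
  Here 1 - F0((-x)-) = mu0([-x, inf)).\<close>
definition sym_cdf :: "real measure \<Rightarrow> real \<Rightarrow> real" where
  "sym_cdf M x = (measure M {..x} + measure M {-x..}) / 2"

definition kac_solution :: "real \<Rightarrow> real measure \<Rightarrow> (real \<Rightarrow> real measure) \<Rightarrow> bool" where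
  "kac_solution p \<mu>0 \<mu> \<longleftrightarrow>
     (\<forall>t\<ge>0. real_distribution (\<mu> t)) \<and> \<mu> 0 = \<mu>0 \<and>
     (\<forall>\<xi> t. t > 0 \<longrightarrow>
        ((\<lambda>s. char (\<mu> s) \<xi>) has_vector_derivative
           (complex_of_real (1 / (2 * pi)) *
              integral {0..2*pi} (\<lambda>\<theta>. char (\<mu> t) (\<xi> * cp p \<theta>) * char (\<mu> t) (\<xi> * sp p \<theta>))
            - char (\<mu> t) \<xi>)) (at t)) \<and>
     (\<forall>\<xi>. ((\<lambda>s. char (\<mu> s) \<xi>) \<longlongrightarrow> char \<mu>0 \<xi>) (at_right 0))"

end

theory Submission
  imports Defs
begin

text \<open>Put \<open>\<alpha> = 2 / (1 + p)\<close>. The tail hypothesis makes the truncated second moment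
  \<open>\<integral> min (y\<^sup>2) (s\<^sup>2) d\<mu>\<^sub>0\<close> grow at most like \<open>s\<^sup>2\<^sup>-\<^sup>\<alpha>\<close>, and this yields
  \<open>1 - Re \<phi>\<^sub>0(\<xi>) \<le> K \<bar>\<xi>\<bar>\<^sup>\<alpha>\<close>. Because \<open>\<bar>c\<^sub>p(\<theta>)\<bar>\<^sup>\<alpha> + \<bar>s\<^sub>p(\<theta>)\<bar>\<^sup>\<alpha> = cos\<^sup>2 \<theta> + sin\<^sup>2 \<theta> = 1\<close>,
  the collision term maps this bound to itself up to twice the current error, so along the flow
  the excess \<open>1 - Re \<phi>(\<xi>,t) - K \<bar>\<xi>\<bar>\<^sup>\<alpha>\<close> satisfies a Duhamel inequality which, iterated on
  short time strips, shows that it stays nonpositive. A bound on \<open>1 - Re \<phi>\<close> near the origin that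
  is uniform in \<open>t\<close> is a uniform tail bound by the truncation inequality.\<close>

section \<open>Characteristic functions\<close>

lemma (in real_distribution) Re_char_le_1: "Re (char M x) \<le> 1"
  using cmod_char_le_1[of x] abs_Re_le_cmod[of "char M x"] by linarith

lemma (in real_distribution) Re_char_ge_minus_1: "- 1 \<le> Re (char M x)"
  using cmod_char_le_1[of x] abs_Re_le_cmod[of "char M x"] by linarith

lemma char_uminus: "char M (- x) = cnj (char M x)"
proof -
  have "cnj (char M x) = (CLINT y|M. cnj (iexp (x * y)))"
    unfolding char_def by simp
  thus ?thesis
    unfolding char_def by (simp add: exp_cnj)
qed

lemma (in real_distribution) one_minus_Re_char:
  "1 - Re (char M t) = (LINT y|M. 1 - cos (t * y))"
proof -
  have "Re (char M t) = (LINT y|M. Re (iexp (t * y)))"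
    unfolding char_def by (intro integral_Re[symmetric] integrable_const_bound[where B = 1]) auto
  also have "\<dots> = (LINT y|M. cos (t * y))"
    by (simp add: Re_exp)
  finally show ?thesis
    by (simp add: integrable_const_bound[where B = 1] prob_space[unfolded space_eq_univ])
qed

lemma one_minus_cos_le: "1 - cos (x :: real) \<le> x\<^sup>2 / 2"
proof -
  have "(sin (x / 2))\<^sup>2 \<le> (x / 2)\<^sup>2"
    using abs_sin_x_le_abs_x[of "x / 2"] by (simp add: abs_le_square_iff[symmetric])
  thus ?thesis
    using cos_double_sin[of "x / 2"] by (simp add: power_divide)
qed

section \<open>Tails from the characteristic function\<close>

lemma set_integral_one_minus_cos_ge:
  fixes u x :: real
  assumes u: "u > 0" and x: "2 / u \<le> \<bar>x\<bar>"
  shows "u \<le> (LBINT t:{-u..u}. 1 - cos (t * x))"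
proof -
  have "x \<noteq> 0" using u x by (auto simp: field_simps)
  have "((\<lambda>t. 1 - cos (t * x)) has_integral (u - sin (u * x) / x) - (- u - sin (- u * x) / x)) {-u..u}"
    using u \<open>x \<noteq> 0\<close>
    by (intro fundamental_theorem_of_calculus)
       (auto intro!: derivative_eq_intros simp flip: has_real_derivative_iff_has_vector_derivative)
  moreover have "set_integrable lborel {-u..u} (\<lambda>t. 1 - cos (t * x))"
    by (intro borel_integrable_atLeastAtMost' continuous_intros)
  ultimately have "(LBINT t:{-u..u}. 1 - cos (t * x)) = 2 * u - 2 * (sin (u * x) / x)"
    by (simp add: set_borel_integral_eq_integral integral_unique)
  moreover have "2 * (sin (u * x) / x) \<le> u"
  proof -
    have "2 * (sin (u * x) / x) \<le> 2 * (\<bar>sin (u * x)\<bar> / \<bar>x\<bar>)"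
      by (metis abs_divide abs_ge_self mult_left_mono zero_le_numeral)
    also have "\<dots> \<le> 2 / \<bar>x\<bar>"
      using \<open>x \<noteq> 0\<close> abs_sin_le_one[of "u * x"] by (simp add: divide_right_mono)
    also have "\<dots> \<le> u"
      using x u \<open>x \<noteq> 0\<close> by (simp add: field_simps)
    finally show ?thesis .
  qed
  ultimately show ?thesis by simp
qed

lemma (in real_distribution) truncation_inequality:
  assumes u: "u > 0"
  shows "u * measure M {x. 2 / u \<le> \<bar>x\<bar>} \<le> (LBINT t:{-u..u}. 1 - Re (char M t))"
proof -
  interpret P: pair_sigma_finite M lborel ..
  define f where "f y t = indicator {-u..u} t * (1 - cos (t * y))" for y t :: real
  have "integrable (M \<Otimes>\<^sub>M lborel) (\<lambda>z. indicator (UNIV \<times> {-u..u}) z *\<^sub>R (1 - cos (snd z * fst z)))"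
    using u by (intro integrableI_bounded_set_indicator[where B = 2])
      (auto simp: lborel.emeasure_pair_measure_Times ennreal_mult_less_top abs_le_iff emeasure_eq_measure
         intro: order_trans[OF _ cos_ge_minus_one] simp del: cos_ge_minus_one)
  hence int_f: "integrable (M \<Otimes>\<^sub>M lborel) (\<lambda>(y, t). f y t)"
    unfolding f_def by (simp add: indicator_times split_beta')
  have "(LBINT t:{-u..u}. 1 - Re (char M t)) = (LBINT t. LINT y|M. f y t)"
    unfolding set_lebesgue_integral_def f_def
    by (simp add: one_minus_Re_char)
  also have "\<dots> = (LINT y|M. LINT t|lborel. f y t)"
    by (rule P.Fubini_integral[OF int_f])
  also have "\<dots> \<ge> (LINT y|M. u * indicator {x. 2 / u \<le> \<bar>x\<bar>} y)"
  proof (rule integral_mono)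
    show "integrable M (\<lambda>y. LINT t|lborel. f y t)"
      using P.integrable_fst'[OF int_f] by simp
    fix y
    have "0 \<le> (LINT t|lborel. f y t)"
      by (intro Bochner_Integration.integral_nonneg) (simp add: f_def)
    then show "u * indicator {x. 2 / u \<le> \<bar>x\<bar>} y \<le> (LINT t|lborel. f y t)"
      using set_integral_one_minus_cos_ge[OF u, of y]
      by (auto simp: f_def set_lebesgue_integral_def split: split_indicator)
  qed (auto simp: emeasure_eq_measure)
  finally show ?thesis
    by (simp add: emeasure_eq_measure)
qed

lemma (in real_distribution) tail_le_of_char_bound:
  assumes u: "u > 0" and K: "K \<ge> 0" and r: "r \<ge> 0"
    and bound: "\<And>t. 1 - Re (char M t) \<le> K * \<bar>t\<bar> powr r"
  shows "measure M {x. 2 / u \<le> \<bar>x\<bar>} \<le> 2 * K * u powr r"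
proof -
  have "u * measure M {x. 2 / u \<le> \<bar>x\<bar>} \<le> (LBINT t:{-u..u}. 1 - Re (char M t))"
    by (rule truncation_inequality[OF u])
  also have "\<dots> \<le> (LBINT t:{-u..u}. K * u powr r)"
  proof (rule set_integral_mono)
    show "set_integrable lborel {-u..u} (\<lambda>t. 1 - Re (char M t))"
      by (intro borel_integrable_atLeastAtMost' continuous_at_imp_continuous_on ballI
          continuous_intros isCont_char)
    fix t assume "t \<in> {-u..u}"
    hence "K * \<bar>t\<bar> powr r \<le> K * u powr r"
      using K r by (auto intro!: mult_left_mono powr_mono2)
    thus "1 - Re (char M t) \<le> K * u powr r"
      using bound[of t] by linarith
  qed (intro borel_integrable_atLeastAtMost' continuous_intros)
  also have "\<dots> = u * (2 * K * u powr r)"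
    using u by (simp add: set_integral_const)
  finally show ?thesis
    using u by simp
qed

lemma uniformly_tight_of_char_bound:
  fixes M :: "'i \<Rightarrow> real measure"
  assumes T: "T \<noteq> {}" and dist: "\<And>t. t \<in> T \<Longrightarrow> real_distribution (M t)"
    and K: "K \<ge> 0" and r: "r > 0"
    and bound: "\<And>t \<xi>. t \<in> T \<Longrightarrow> 1 - Re (char (M t) \<xi>) \<le> K * \<bar>\<xi>\<bar> powr r"
  shows "\<forall>\<epsilon>>0. \<exists>a b. a \<le> b \<and> (INF t\<in>T. measure (M t) {a..b}) > 1 - \<epsilon>"
proof (intro allI impI)
  fix \<epsilon> :: real assume \<epsilon>: "\<epsilon> > 0"
  define u where "u = (\<epsilon> / (4 * (K + 1))) powr (1 / r)"
  have u: "u > 0" and "u powr r = \<epsilon> / (4 * (K + 1))"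
    unfolding u_def using \<epsilon> K r by (simp_all add: powr_powr)
  hence "2 * K * u powr r = \<epsilon> / 2 * (K / (K + 1))"
    using K by (simp add: field_simps)
  also have "\<dots> \<le> \<epsilon> / 2"
    using \<epsilon> K by (intro mult_left_le) auto
  finally have uK: "2 * K * u powr r \<le> \<epsilon> / 2" .
  have "1 - \<epsilon> / 2 \<le> measure (M t) {-2/u..2/u}" if t: "t \<in> T" for t
  proof -
    interpret real_distribution "M t" by (rule dist[OF t])
    have "UNIV - {-2/u..2/u} \<subseteq> {x. 2 / u \<le> \<bar>x\<bar>}" by auto
    hence "measure (M t) (UNIV - {-2/u..2/u}) \<le> measure (M t) {x. 2 / u \<le> \<bar>x\<bar>}"
      by (intro finite_measure_mono) auto
    hence "1 - measure (M t) {-2/u..2/u} \<le> measure (M t) {x. 2 / u \<le> \<bar>x\<bar>}"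
      using prob_compl[of "{-2/u..2/u}"] by simp
    also have "\<dots> \<le> 2 * K * u powr r"
      using tail_le_of_char_bound[OF u K] r bound[OF t] by simp
    finally show ?thesis
      using uK by linarith
  qed
  hence "1 - \<epsilon> / 2 \<le> (INF t\<in>T. measure (M t) {-2/u..2/u})"
    using T by (intro cINF_greatest) auto
  moreover have "-2/u \<le> 2/u" using u by simp
  ultimately show "\<exists>a b. a \<le> b \<and> (INF t\<in>T. measure (M t) {a..b}) > 1 - \<epsilon>"
    using \<epsilon> by (intro exI[of _ "-2/u"] exI[of _ "2/u"]) auto
qed

section \<open>The characteristic function from the tails\<close>

lemma (in real_distribution) measure_abs_gt_eq_sym_cdf:
  assumes "x \<ge> 0"
  shows "measure M {y. x < \<bar>y\<bar>} = 2 * (1 - sym_cdf M x)"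
proof -
  have "{y. x < \<bar>y\<bar>} = {x<..} \<union> {..<-x}" using assms by auto
  moreover have "measure M ({x<..} \<union> {..<-x}) = measure M {x<..} + measure M {..<-x}"
    using assms by (intro finite_measure_Union) auto
  moreover have "measure M {..x} = 1 - measure M {x<..}" "measure M {-x..} = 1 - measure M {..<-x}"
    using prob_compl[of "{x<..}"] prob_compl[of "{..<-x}"]
    by (simp_all add: Compl_eq_Diff_UNIV[symmetric] flip: atMost_def atLeast_def)
  ultimately show ?thesis
    unfolding sym_cdf_def by (simp add: field_simps)
qed

lemma (in real_distribution) power_tail_bound:
  assumes "Limsup at_top (\<lambda>x. ereal (x powr r * (1 - sym_cdf M x))) < \<infinity>"
  obtains C x0 where "C \<ge> 0" "x0 > 0" "\<And>x. x \<ge> x0 \<Longrightarrow> measure M {y. x < \<bar>y\<bar>} \<le> C * x powr -r"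
proof -
  obtain c where "Limsup at_top (\<lambda>x. ereal (x powr r * (1 - sym_cdf M x))) < ereal c"
    using ereal_dense2[OF assms] by blast
  hence "eventually (\<lambda>x. ereal (x powr r * (1 - sym_cdf M x)) < ereal c) at_top"
    by (rule Limsup_lessD)
  then obtain N where N: "\<And>x. x \<ge> N \<Longrightarrow> x powr r * (1 - sym_cdf M x) < c"
    unfolding eventually_at_top_linorder by auto
  have "measure M {y. x < \<bar>y\<bar>} \<le> max (2 * c) 0 * x powr -r" if x: "x \<ge> max N 1" for x
  proof -
    have "x powr r * measure M {y. x < \<bar>y\<bar>} \<le> 2 * c"
      using N[of x] x by (simp add: measure_abs_gt_eq_sym_cdf algebra_simps)
    hence "measure M {y. x < \<bar>y\<bar>} \<le> 2 * c * x powr -r"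
      using x by (simp add: powr_minus field_simps)
    also have "\<dots> \<le> max (2 * c) 0 * x powr -r"
      by (intro mult_right_mono) auto
    finally show ?thesis .
  qed
  thus ?thesis
    using that[of "max (2 * c) 0" "max N 1"] by simp
qed

definition truncated_second_moment :: "real measure \<Rightarrow> real \<Rightarrow> real" where
  "truncated_second_moment M s = (LINT y|M. min (y\<^sup>2) (s\<^sup>2))"

lemma (in real_distribution) integrable_min_square [simp]:
  "integrable M (\<lambda>y. min (y\<^sup>2) (s\<^sup>2))"
  by (rule integrable_const_bound[where B = "s\<^sup>2"]) auto

lemma (in real_distribution) truncated_second_moment_le:
  "truncated_second_moment M s \<le> s\<^sup>2"
proof -
  have "truncated_second_moment M s \<le> (LINT y|M. s\<^sup>2)"
    unfolding truncated_second_moment_def by (intro integral_mono) auto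
  thus ?thesis by (simp add: prob_space[unfolded space_eq_univ])
qed

lemma (in real_distribution) truncated_second_moment_halve:
  assumes s: "s > 0"
  shows "truncated_second_moment M s
    \<le> truncated_second_moment M (s / 2) + s\<^sup>2 * measure M {y. s / 2 < \<bar>y\<bar>}"
proof -
  have int: "integrable M (\<lambda>y. s\<^sup>2 * indicator {y. s / 2 < \<bar>y\<bar>} y)"
    by (intro integrable_mult_right integrable_real_indicator) (auto simp: emeasure_eq_measure)
  have "min (y\<^sup>2) (s\<^sup>2) \<le> min (y\<^sup>2) ((s / 2)\<^sup>2) + s\<^sup>2 * indicator {y. s / 2 < \<bar>y\<bar>} y" for y
  proof (cases "s / 2 < \<bar>y\<bar>")
    case False
    hence "y\<^sup>2 \<le> (s / 2)\<^sup>2"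
      using s by (simp add: abs_le_square_iff[symmetric])
    thus ?thesis by (simp add: indicator_def min_def)
  qed (simp add: min_def add_increasing)
  hence "truncated_second_moment M s
      \<le> (LINT y|M. min (y\<^sup>2) ((s / 2)\<^sup>2) + s\<^sup>2 * indicator {y. s / 2 < \<bar>y\<bar>} y)"
    unfolding truncated_second_moment_def using int by (intro integral_mono) auto
  also have "\<dots> = truncated_second_moment M (s / 2) + s\<^sup>2 * measure M {y. s / 2 < \<bar>y\<bar>}"
    unfolding truncated_second_moment_def using int by simp
  finally show ?thesis .
qed

lemma (in real_distribution) truncated_second_moment_growth:
  assumes r: "0 < r" "r < 2" and C: "C \<ge> 0" and x0: "x0 > 0"
    and tail: "\<And>x. x \<ge> x0 \<Longrightarrow> measure M {y. x < \<bar>y\<bar>} \<le> C * x powr -r"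
  obtains A where "A \<ge> 0" "\<And>s. s \<ge> x0 \<Longrightarrow> truncated_second_moment M s \<le> A * s powr (2 - r)"
proof -
  define q :: real where "q = 2 powr (r - 2)"
  have q: "q < 1" unfolding q_def using r by (simp add: powr_less_one)
  define A where "A = max ((2 * x0) powr r) (C * 2 powr r / (1 - q))"
  have base: "truncated_second_moment M s \<le> A * s powr (2 - r)" if s: "x0 \<le> s" "s \<le> 2 * x0" for s
  proof -
    have "truncated_second_moment M s \<le> s powr r * s powr (2 - r)"
      using truncated_second_moment_le[of s] s x0 by (simp add: powr_add[symmetric])
    also have "\<dots> \<le> A * s powr (2 - r)"
      unfolding A_def using s x0 r by (intro mult_right_mono max.coboundedI1 powr_mono2) auto
    finally show ?thesis .
  qed
  have step: "truncated_second_moment M s \<le> A * s powr (2 - r)"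
    if s: "2 * x0 \<le> s" and IH: "truncated_second_moment M (s / 2) \<le> A * (s / 2) powr (2 - r)" for s
  proof -
    have "s > 0" using s x0 by simp
    have "measure M {y. s / 2 < \<bar>y\<bar>} \<le> C * (s / 2) powr -r"
      using tail[of "s / 2"] s by simp
    hence "truncated_second_moment M s \<le> A * (s / 2) powr (2 - r) + s\<^sup>2 * (C * (s / 2) powr -r)"
      using truncated_second_moment_halve[OF \<open>s > 0\<close>] IH
      by (meson add_mono mult_left_mono order_trans zero_le_power2)
    also have "(s / 2) powr (2 - r) = s powr (2 - r) * q"
      unfolding q_def using \<open>s > 0\<close> by (simp add: powr_divide powr_diff)
    also have "s\<^sup>2 * (C * (s / 2) powr -r) = s powr (2 - r) * (C * 2 powr r)"
      using \<open>s > 0\<close> by (simp add: powr_divide powr_minus_divide powr_diff flip: powr_numeral)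
    also have "A * (s powr (2 - r) * q) + s powr (2 - r) * (C * 2 powr r)
        = s powr (2 - r) * (A * q + C * 2 powr r)"
      by (simp add: algebra_simps)
    also have "\<dots> \<le> s powr (2 - r) * A"
    proof -
      have "C * 2 powr r \<le> A * (1 - q)"
        unfolding A_def using q by (simp add: pos_divide_le_eq[symmetric])
      thus ?thesis by (intro mult_left_mono) (auto simp: algebra_simps)
    qed
    finally show ?thesis by (simp add: mult.commute)
  qed
  have doubling: "truncated_second_moment M s \<le> A * s powr (2 - r)"
    if "x0 \<le> s" "s \<le> x0 * 2 ^ n" for n s
    using that
  proof (induction n arbitrary: s)
    case 0
    thus ?case using base x0 by simp
  next
    case (Suc n)
    show ?case
    proof (cases "s \<le> 2 * x0")
      case True
      thus ?thesis using Suc.prems base by simp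
    next
      case False
      have "x0 \<le> s / 2" "s / 2 \<le> x0 * 2 ^ n"
        using False Suc.prems(2) by simp_all
      hence "truncated_second_moment M (s / 2) \<le> A * (s / 2) powr (2 - r)"
        by (rule Suc.IH)
      with False show ?thesis by (intro step[of s]) simp_all
    qed
  qed
  show ?thesis
  proof (rule that)
    show "A \<ge> 0" unfolding A_def by (rule max.coboundedI1) simp
    fix s assume "x0 \<le> s"
    obtain n where "s / x0 < 2 ^ n"
      using real_arch_pow[of 2 "s / x0"] by auto
    hence "s < x0 * 2 ^ n"
      using x0 by (simp add: divide_less_eq mult.commute)
    thus "truncated_second_moment M s \<le> A * s powr (2 - r)"
      using doubling \<open>x0 \<le> s\<close> less_imp_le by blast
  qed
qed

lemma (in real_distribution) one_minus_Re_char_le_truncated_second_moment: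
  assumes "\<xi> \<noteq> 0"
  shows "1 - Re (char M \<xi>) \<le> \<xi>\<^sup>2 / 2 * truncated_second_moment M (2 / \<bar>\<xi>\<bar>)"
proof -
  have "1 - cos (\<xi> * y) \<le> \<xi>\<^sup>2 / 2 * min (y\<^sup>2) ((2 / \<bar>\<xi>\<bar>)\<^sup>2)" for y
  proof -
    have "\<xi>\<^sup>2 / 2 * min (y\<^sup>2) ((2 / \<bar>\<xi>\<bar>)\<^sup>2) = min ((\<xi> * y)\<^sup>2 / 2) 2"
      using assms by (simp add: min_mult_distrib_left power_divide field_simps)
    thus ?thesis
      using one_minus_cos_le[of "\<xi> * y"] cos_ge_minus_one[of "\<xi> * y"] by linarith
  qed
  hence "(LINT y|M. 1 - cos (\<xi> * y)) \<le> (LINT y|M. \<xi>\<^sup>2 / 2 * min (y\<^sup>2) ((2 / \<bar>\<xi>\<bar>)\<^sup>2))"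
    by (intro integral_mono integrable_mult_right integrable_min_square
        integrable_const_bound[where B = 2]) auto
  thus ?thesis
    by (simp add: one_minus_Re_char truncated_second_moment_def)
qed

lemma (in real_distribution) char_bound_of_power_tail:
  assumes r: "0 < r" "r < 2"
    and lim: "Limsup at_top (\<lambda>x. ereal (x powr r * (1 - sym_cdf M x))) < \<infinity>"
  obtains K where "K \<ge> 0" "\<And>\<xi>. 1 - Re (char M \<xi>) \<le> K * \<bar>\<xi>\<bar> powr r"
proof -
  obtain C x0 where C: "C \<ge> 0" and x0: "x0 > 0"
    and tail: "\<And>x. x \<ge> x0 \<Longrightarrow> measure M {y. x < \<bar>y\<bar>} \<le> C * x powr -r"
    using power_tail_bound[OF lim] by blast
  obtain A where A: "A \<ge> 0"
    and growth: "\<And>s. s \<ge> x0 \<Longrightarrow> truncated_second_moment M s \<le> A * s powr (2 - r)"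
    using truncated_second_moment_growth[OF r C x0 tail] by blast
  define K where "K = max (A * 2 powr (2 - r) / 2) (2 * (x0 / 2) powr r)"
  have low: "1 - Re (char M \<xi>) \<le> K * \<bar>\<xi>\<bar> powr r" if "\<xi> \<noteq> 0" "x0 \<le> 2 / \<bar>\<xi>\<bar>" for \<xi>
  proof -
    have "1 - Re (char M \<xi>) \<le> \<xi>\<^sup>2 / 2 * (A * (2 / \<bar>\<xi>\<bar>) powr (2 - r))"
      using one_minus_Re_char_le_truncated_second_moment[OF that(1)] growth[OF that(2)]
      by (meson mult_left_mono order_trans zero_le_divide_iff zero_le_numeral zero_le_power2)
    also have "\<dots> = A * 2 powr (2 - r) / 2 * \<bar>\<xi>\<bar> powr r"
      using that by (simp add: powr_divide powr_diff flip: powr_numeral) (simp add: field_simps)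
    also have "\<dots> \<le> K * \<bar>\<xi>\<bar> powr r"
      unfolding K_def by (intro mult_right_mono) auto
    finally show ?thesis .
  qed
  have high: "1 - Re (char M \<xi>) \<le> K * \<bar>\<xi>\<bar> powr r" if "\<xi> \<noteq> 0" "2 / \<bar>\<xi>\<bar> < x0" for \<xi>
  proof -
    have "(2 / x0) powr r \<le> \<bar>\<xi>\<bar> powr r"
      using that x0 r by (intro powr_mono2) (auto simp: field_simps)
    hence "2 \<le> 2 * (x0 / 2) powr r * \<bar>\<xi>\<bar> powr r"
      using x0 by (simp add: powr_divide field_simps)
    also have "\<dots> \<le> K * \<bar>\<xi>\<bar> powr r"
      unfolding K_def by (intro mult_right_mono) auto
    finally show ?thesis
      using Re_char_ge_minus_1[of \<xi>] by linarith
  qed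
  show ?thesis
  proof (rule that)
    show "K \<ge> 0" unfolding K_def using A by (simp add: le_max_iff_disj)
    show "1 - Re (char M \<xi>) \<le> K * \<bar>\<xi>\<bar> powr r" for \<xi>
      using low[of \<xi>] high[of \<xi>] by (cases "\<xi> = 0") (simp add: char_zero, linarith)
  qed
qed

section \<open>The collision operator\<close>

lemma abs_cp_powr:
  assumes "p > 0"
  shows "\<bar>cp p \<theta>\<bar> powr (2 / (1 + p)) = (cos \<theta>)\<^sup>2"
proof -
  have "\<bar>cp p \<theta>\<bar> = \<bar>cos \<theta>\<bar> powr (1 + p)"
    unfolding cp_def by (simp add: abs_mult powr_add)
  hence "\<bar>cp p \<theta>\<bar> powr (2 / (1 + p)) = \<bar>cos \<theta>\<bar> powr ((1 + p) * (2 / (1 + p)))"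
    by (simp add: powr_powr)
  also have "(1 + p) * (2 / (1 + p)) = 2" using assms by (simp add: field_simps)
  finally show ?thesis by simp
qed

lemma abs_sp_powr:
  assumes "p > 0"
  shows "\<bar>sp p \<theta>\<bar> powr (2 / (1 + p)) = (sin \<theta>)\<^sup>2"
proof -
  have "\<bar>sp p \<theta>\<bar> = \<bar>sin \<theta>\<bar> powr (1 + p)"
    unfolding sp_def by (simp add: abs_mult powr_add)
  hence "\<bar>sp p \<theta>\<bar> powr (2 / (1 + p)) = \<bar>sin \<theta>\<bar> powr ((1 + p) * (2 / (1 + p)))"
    by (simp add: powr_powr)
  also have "(1 + p) * (2 / (1 + p)) = 2" using assms by (simp add: field_simps)
  finally show ?thesis by simp
qed

lemma cp_2pi_minus [simp]: "cp p (2 * pi - \<theta>) = cp p \<theta>"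
  unfolding cp_def by simp

lemma sp_2pi_minus [simp]: "sp p (2 * pi - \<theta>) = - sp p \<theta>"
  unfolding sp_def by simp

lemma continuous_on_cp: "p > 0 \<Longrightarrow> continuous_on S (cp p)"
  unfolding cp_def by (intro continuous_intros continuous_on_powr') auto

lemma continuous_on_sp: "p > 0 \<Longrightarrow> continuous_on S (sp p)"
  unfolding sp_def by (intro continuous_intros continuous_on_powr') auto

lemma has_integral_reflect_interval:
  fixes f :: "real \<Rightarrow> 'b::real_normed_vector"
  assumes "(f has_integral I) {a..b}"
  shows "((\<lambda>x. f (a + b - x)) has_integral I) {a..b}"
proof -
  have "((\<lambda>x. f ((-1) *\<^sub>R x + (a + b))) has_integral (1 / \<bar>-1\<bar> ^ DIM(real)) *\<^sub>R I)
      ((\<lambda>x. (1 / -1) *\<^sub>R x + - ((1 / -1) *\<^sub>R (a + b))) ` cbox a b)"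
    using assms by (intro has_integral_affinity) auto
  moreover have "(\<lambda>x::real. (1 / -1) *\<^sub>R x + - ((1 / -1) *\<^sub>R (a + b))) ` cbox a b = {a..b}"
    by (auto simp: image_iff intro!: bexI[of _ "a + b - x" for x])
  ultimately show ?thesis by simp
qed

definition kac_gain :: "real \<Rightarrow> real measure \<Rightarrow> real \<Rightarrow> complex" where
  "kac_gain p N \<xi> = complex_of_real (1 / (2 * pi)) *
     integral {0..2*pi} (\<lambda>\<theta>. char N (\<xi> * cp p \<theta>) * char N (\<xi> * sp p \<theta>))"

definition char_excess :: "real \<Rightarrow> real \<Rightarrow> real measure \<Rightarrow> real \<Rightarrow> real" where
  "char_excess K r N \<xi> = 1 - Re (char N \<xi>) - K * \<bar>\<xi>\<bar> powr r"

lemma Re_kac_gain_eq_integral: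
  assumes p: "p > 0" and N: "real_distribution N"
  shows "((\<lambda>\<theta>. Re (char N (\<xi> * cp p \<theta>)) * Re (char N (\<xi> * sp p \<theta>)))
    has_integral (2 * pi * Re (kac_gain p N \<xi>))) {0..2*pi}"
proof -
  define f where "f \<theta> = char N (\<xi> * cp p \<theta>) * char N (\<xi> * sp p \<theta>)" for \<theta>
  have cc: "continuous_on UNIV (char N)"
    by (intro continuous_at_imp_continuous_on ballI real_distribution.isCont_char[OF N])
  have "continuous_on {0..2*pi} (\<lambda>\<theta>. \<xi> * cp p \<theta>)" "continuous_on {0..2*pi} (\<lambda>\<theta>. \<xi> * sp p \<theta>)"
    using continuous_on_cp[OF p] continuous_on_sp[OF p] by (auto intro: continuous_on_mult_left)
  hence "continuous_on {0..2*pi} f"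
    unfolding f_def using continuous_on_compose2[OF cc] by (intro continuous_on_mult) auto
  hence f: "(f has_integral integral {0..2*pi} f) {0..2*pi}"
    by (intro integrable_integral integrable_continuous_real)
  \<comment> \<open>under \<open>\<theta> \<mapsto> 2\<pi> - \<theta>\<close> the second factor is conjugated, which kills the imaginary parts\<close>
  have "Re (f \<theta>) + Re (f (2 * pi - \<theta>))
      = 2 * (Re (char N (\<xi> * cp p \<theta>)) * Re (char N (\<xi> * sp p \<theta>)))" for \<theta>
    unfolding f_def by (simp add: char_uminus[of N "\<xi> * sp p \<theta>", simplified])
  moreover have "((\<lambda>\<theta>. Re (f \<theta>) + Re (f (2 * pi - \<theta>)))
      has_integral (Re (integral {0..2*pi} f) + Re (integral {0..2*pi} f))) {0..2*pi}"
    using has_integral_reflect_interval[OF f] f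
    by (intro has_integral_add has_integral_Re) simp_all
  ultimately have "((\<lambda>\<theta>. 2 * (Re (char N (\<xi> * cp p \<theta>)) * Re (char N (\<xi> * sp p \<theta>))))
      has_integral 2 * Re (integral {0..2*pi} f)) {0..2*pi}"
    by simp
  from has_integral_mult_right[OF this, of "1 / 2"]
  have "((\<lambda>\<theta>. Re (char N (\<xi> * cp p \<theta>)) * Re (char N (\<xi> * sp p \<theta>)))
      has_integral Re (integral {0..2*pi} f)) {0..2*pi}"
    by simp
  moreover have "2 * pi * Re (kac_gain p N \<xi>) = Re (integral {0..2*pi} f)"
    unfolding kac_gain_def f_def by simp
  ultimately show ?thesis
    by simp
qed

lemma Re_kac_gain_ge:
  assumes p: "p > 0" and N: "real_distribution N"
    and bound: "\<And>\<eta>. char_excess K (2 / (1 + p)) N \<eta> \<le> B"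
  shows "1 - K * \<bar>\<xi>\<bar> powr (2 / (1 + p)) - 2 * B \<le> Re (kac_gain p N \<xi>)"
proof -
  define c where "c = 1 - K * \<bar>\<xi>\<bar> powr (2 / (1 + p)) - 2 * B"
  have "c \<le> Re (char N (\<xi> * cp p \<theta>)) * Re (char N (\<xi> * sp p \<theta>))" for \<theta>
  proof -
    define R1 where "R1 = Re (char N (\<xi> * cp p \<theta>))"
    define R2 where "R2 = Re (char N (\<xi> * sp p \<theta>))"
    have "1 - R1 \<le> K * \<bar>\<xi>\<bar> powr (2 / (1 + p)) * (cos \<theta>)\<^sup>2 + B"
      using bound[of "\<xi> * cp p \<theta>"] abs_cp_powr[OF p]
      unfolding R1_def char_excess_def by (simp add: abs_mult powr_mult algebra_simps)
    moreover have "1 - R2 \<le> K * \<bar>\<xi>\<bar> powr (2 / (1 + p)) * (sin \<theta>)\<^sup>2 + B"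
      using bound[of "\<xi> * sp p \<theta>"] abs_sp_powr[OF p]
      unfolding R2_def char_excess_def by (simp add: abs_mult powr_mult algebra_simps)
    moreover have "0 \<le> (1 - R1) * (1 - R2)"
      using real_distribution.Re_char_le_1[OF N] unfolding R1_def R2_def by simp
    moreover have "K * \<bar>\<xi>\<bar> powr (2 / (1 + p)) * (cos \<theta>)\<^sup>2 + K * \<bar>\<xi>\<bar> powr (2 / (1 + p)) * (sin \<theta>)\<^sup>2
        = K * \<bar>\<xi>\<bar> powr (2 / (1 + p))"
      by (simp flip: distrib_left)
    ultimately show ?thesis
      unfolding c_def R1_def[symmetric] R2_def[symmetric] by (simp add: algebra_simps)
  qed
  moreover have "((\<lambda>\<theta>. c) has_integral 2 * pi * c) {0..2*pi}"
    using has_integral_const_real[of c 0 "2 * pi"] by simp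
  ultimately have "2 * pi * c \<le> 2 * pi * Re (kac_gain p N \<xi>)"
    using Re_kac_gain_eq_integral[OF p N] by (blast intro: has_integral_le)
  thus ?thesis
    unfolding c_def by simp
qed

section \<open>Propagation of the bound along the Kac flow\<close>

lemma kac_solution_real_distribution:
  "kac_solution p \<mu>0 \<mu> \<Longrightarrow> t \<ge> 0 \<Longrightarrow> real_distribution (\<mu> t)"
  unfolding kac_solution_def by blast

lemma kac_solution_Re_char_deriv:
  assumes "kac_solution p \<mu>0 \<mu>" "\<tau> > 0"
  shows "((\<lambda>s. Re (char (\<mu> s) \<xi>)) has_real_derivative
    Re (kac_gain p (\<mu> \<tau>) \<xi>) - Re (char (\<mu> \<tau>) \<xi>)) (at \<tau>)"
proof -
  have "((\<lambda>s. char (\<mu> s) \<xi>) has_vector_derivative (kac_gain p (\<mu> \<tau>) \<xi> - char (\<mu> \<tau>) \<xi>)) (at \<tau>)"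
    using assms unfolding kac_solution_def kac_gain_def by blast
  from has_field_derivative_Re[OF this] show ?thesis by simp
qed

lemma kac_solution_Re_char_continuous_on:
  assumes kac: "kac_solution p \<mu>0 \<mu>" and ab: "0 \<le> a" "a < b"
  shows "continuous_on {a..b} (\<lambda>\<tau>. Re (char (\<mu> \<tau>) \<xi>))"
proof -
  have "continuous (at \<tau> within {a..b}) (\<lambda>\<tau>. Re (char (\<mu> \<tau>) \<xi>))" if "\<tau> \<in> {a..b}" for \<tau>
  proof (cases "\<tau> > 0")
    case True
    thus ?thesis
      by (rule continuous_at_imp_continuous_within[OF DERIV_isCont[OF kac_solution_Re_char_deriv[OF kac]]])
  next
    case False
    hence "\<tau> = 0" "a = 0" using that ab by auto
    have "((\<lambda>s. char (\<mu> s) \<xi>) \<longlongrightarrow> char (\<mu> 0) \<xi>) (at_right 0)"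
      using kac unfolding kac_solution_def by auto
    moreover have "at 0 within {0..b} = at_right 0"
      using ab \<open>a = 0\<close> by (intro at_within_Icc_at_right) auto
    ultimately show ?thesis
      unfolding continuous_within \<open>\<tau> = 0\<close> \<open>a = 0\<close> by (auto intro: tendsto_Re)
  qed
  thus ?thesis by (simp add: continuous_on_eq_continuous_within)
qed

lemma char_excess_halves:
  assumes p: "p > 0" and kac: "kac_solution p \<mu>0 \<mu>" and B: "B \<ge> 0" and t0: "t0 \<ge> 0"
    and start: "\<And>\<eta>. char_excess K (2 / (1 + p)) (\<mu> t0) \<eta> \<le> 0"
    and bound: "\<And>s \<eta>. s \<in> {t0..t0 + 1/4} \<Longrightarrow> char_excess K (2 / (1 + p)) (\<mu> s) \<eta> \<le> B"
    and s: "s \<in> {t0..t0 + 1/4}"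
  shows "char_excess K (2 / (1 + p)) (\<mu> s) \<xi> \<le> B / 2"
proof (cases "s = t0")
  case True
  thus ?thesis using start[of \<xi>] B by simp
next
  case False
  hence ts: "t0 < s" using s by simp
  define e where "e \<tau> = char_excess K (2 / (1 + p)) (\<mu> \<tau>) \<xi>" for \<tau>
  define g where "g \<tau> = exp \<tau> * e \<tau>" for \<tau>
  define g' where "g' \<tau> = exp \<tau> * (1 - K * \<bar>\<xi>\<bar> powr (2 / (1 + p)) - Re (kac_gain p (\<mu> \<tau>) \<xi>))" for \<tau>
  have deriv: "(g has_real_derivative g' \<tau>) (at \<tau>)" if "\<tau> > 0" for \<tau>
  proof -
    have "(e has_real_derivative Re (char (\<mu> \<tau>) \<xi>) - Re (kac_gain p (\<mu> \<tau>) \<xi>)) (at \<tau>)"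
      unfolding e_def char_excess_def
      using DERIV_diff[OF DERIV_diff[OF DERIV_const kac_solution_Re_char_deriv[OF kac that]] DERIV_const]
      by simp
    from DERIV_mult[OF DERIV_exp this] show ?thesis
      unfolding g_def by (rule DERIV_cong) (simp add: g'_def e_def char_excess_def algebra_simps)
  qed
  have cont: "continuous_on {t0..s} g"
    unfolding g_def e_def char_excess_def
    by (intro continuous_intros kac_solution_Re_char_continuous_on[OF kac t0 ts])
  have derf: "(g has_derivative (*) (g' \<tau>)) (at \<tau>)" if "t0 < \<tau>" "\<tau> < s" for \<tau>
    using deriv[of \<tau>] that t0 by (simp add: has_field_derivative_def)
  obtain z where z: "t0 < z" "z < s" and mvt: "g s - g t0 = g' z * (s - t0)"
    using mvt[OF ts cont derf] by blast
  have "1 - K * \<bar>\<xi>\<bar> powr (2 / (1 + p)) - 2 * B \<le> Re (kac_gain p (\<mu> z) \<xi>)"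
    using z s t0 bound by (intro Re_kac_gain_ge[OF p kac_solution_real_distribution[OF kac]]) auto
  hence "g' z \<le> exp s * (2 * B)"
    unfolding g'_def using z B
    by (intro order_trans[OF mult_left_mono mult_right_mono]) auto
  hence "g' z * (s - t0) \<le> exp s * (2 * B) * (1 / 4)"
    using ts s B by (intro order_trans[OF mult_right_mono mult_left_mono]) auto
  moreover have "g t0 \<le> 0"
    unfolding g_def e_def using start[of \<xi>] by (simp add: mult_nonneg_nonpos)
  ultimately have "exp s * e s \<le> exp s * (B / 2)"
    using mvt unfolding g_def by argo
  thus ?thesis unfolding e_def by simp
qed

lemma char_excess_nonpos_on_strip:
  assumes p: "p > 0" and kac: "kac_solution p \<mu>0 \<mu>" and K: "K \<ge> 0" and t0: "t0 \<ge> 0"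
    and start: "\<And>\<eta>. char_excess K (2 / (1 + p)) (\<mu> t0) \<eta> \<le> 0"
    and s: "s \<in> {t0..t0 + 1/4}"
  shows "char_excess K (2 / (1 + p)) (\<mu> s) \<xi> \<le> 0"
proof -
  have geometric: "char_excess K (2 / (1 + p)) (\<mu> s) \<eta> \<le> 2 * (1/2) ^ k"
    if "s \<in> {t0..t0 + 1/4}" for k s \<eta>
    using that
  proof (induction k arbitrary: s \<eta>)
    case 0
    have "- 1 \<le> Re (char (\<mu> s) \<eta>)"
      using 0 t0 by (intro real_distribution.Re_char_ge_minus_1 kac_solution_real_distribution[OF kac]) auto
    moreover have "0 \<le> K * \<bar>\<eta>\<bar> powr (2 / (1 + p))"
      using K by simp
    ultimately show ?case
      unfolding char_excess_def by simp
  next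
    case (Suc k)
    have "char_excess K (2 / (1 + p)) (\<mu> s) \<eta> \<le> 2 * (1/2) ^ k / 2"
      using Suc.IH by (intro char_excess_halves[OF p kac _ t0 start _ Suc.prems]) auto
    thus ?case by simp
  qed
  show ?thesis
  proof (rule ccontr)
    assume "\<not> ?thesis"
    then obtain k where "(1/2 :: real) ^ k < char_excess K (2 / (1 + p)) (\<mu> s) \<xi> / 2"
      using real_arch_pow_inv[of "char_excess K (2 / (1 + p)) (\<mu> s) \<xi> / 2" "1/2"] by auto
    thus False
      using geometric[OF s, of \<xi> k] by simp
  qed
qed

lemma kac_solution_char_bound:
  assumes p: "p > 0" and kac: "kac_solution p \<mu>0 \<mu>" and K: "K \<ge> 0"
    and init: "\<And>\<xi>. 1 - Re (char \<mu>0 \<xi>) \<le> K * \<bar>\<xi>\<bar> powr (2 / (1 + p))"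
    and t: "t \<ge> 0"
  shows "1 - Re (char (\<mu> t) \<xi>) \<le> K * \<bar>\<xi>\<bar> powr (2 / (1 + p))"
proof -
  have strips: "char_excess K (2 / (1 + p)) (\<mu> s) \<eta> \<le> 0" if "s \<in> {0..real n / 4}" for n s \<eta>
    using that
  proof (induction n arbitrary: s \<eta>)
    case 0
    thus ?case
      using init kac unfolding char_excess_def kac_solution_def by simp
  next
    case (Suc n)
    show ?case
    proof (cases "s \<le> real n / 4")
      case True
      thus ?thesis using Suc by simp
    next
      case False
      have start: "char_excess K (2 / (1 + p)) (\<mu> (real n / 4)) \<zeta> \<le> 0" for \<zeta>
        by (rule Suc.IH) simp
      have "s \<in> {real n / 4..real n / 4 + 1/4}"
        using False Suc.prems by (auto simp: field_simps)
      from char_excess_nonpos_on_strip[OF p kac K _ start this] show ?thesis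
        by simp
    qed
  qed
  obtain n where "4 * t \<le> real n"
    using real_arch_simple by blast
  hence "char_excess K (2 / (1 + p)) (\<mu> t) \<xi> \<le> 0"
    using strips[of t n] t by simp
  thus ?thesis
    unfolding char_excess_def by simp
qed

theorem proposition3:
  fixes p :: real and \<mu>0 :: "real measure" and \<mu> :: "real \<Rightarrow> real measure"
  assumes "p > 0"
    and "real_distribution \<mu>0"
    and "kac_solution p \<mu>0 \<mu>"
    and "Limsup at_top (\<lambda>x. ereal (x powr (2 / (1 + p)) * (1 - sym_cdf \<mu>0 x))) < \<infinity>"
  shows "\<forall>\<epsilon>>0. \<exists>a b. a \<le> b \<and> (INF t\<in>{0..}. measure (\<mu> t) {a..b}) > 1 - \<epsilon>"
proof -
  have \<alpha>: "0 < 2 / (1 + p)" "2 / (1 + p) < 2"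
    using assms(1) by (auto simp: field_simps)
  obtain K where K: "K \<ge> 0" and init: "\<And>\<xi>. 1 - Re (char \<mu>0 \<xi>) \<le> K * \<bar>\<xi>\<bar> powr (2 / (1 + p))"
    using real_distribution.char_bound_of_power_tail[OF assms(2) \<alpha> assms(4)] by blast
  show ?thesis
    using kac_solution_real_distribution[OF assms(3)] K \<alpha>(1)
      kac_solution_char_bound[OF assms(1,3) K init]
    by (intro uniformly_tight_of_char_bound[where r = "2 / (1 + p)"]) auto
qed

end
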